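(* Let $F$ be a field of characteristic zero and let $A$ be a $\#$-superalgebra over $F$. If $A$ is a PI-algebra, then there is a real number $\overline d$ such that $c_n^{grs}(A)\leq \overline d^{\,n}$ for every $n\geq1$.
   Context: All algebras are associative over $F$. A superalgebra is $A=A_0\oplus A_1$ with $A_iA_j\subseteq A_{(i+j)\bmod 2}$. A superinvolution is an $F$-linear map $\#:A\to A$ with $A_i^\#\subseteq A_i$, $(c^\#)^\#=c$, $(ab)^\#=(-1)^{\deg a\deg b}b^\#a^\#$ for homogeneous $a,b$; a graded involution is an $F$-linear map $\#$ with $A_i^\#\subseteq A_i$, $(c^\#)^\#=c$, $(ab)^\#=b^\#a^\#$. A $\#$-superalgebra is a superalgebra with one of these. $A_i^{\pm}=\{a\in A_i:a^\#=\pm a\}$. $A$ is a PI-algebra if it satisfies a nontrivial ordinary polynomial identity. Let $\mathcal F$ be the free non-unital associative algebra on variables $y_{i,j}$ (symmetric) and $z_{i,j}$ ($i\in\{0,1\}$, $j\ge1$, skew), with variables of index $i$ of $\mathbb Z_2$-degree $i$, equipped with the induced superinvolution or graded involution ($y^\#=y$, $z^\#=-z$). A $\#$-superidentity of $A$ is an element of $\mathcal F$ vanishing under all substitutions $y_{0,j}\mapsto A_0^+$, $z_{0,j}\mapsto A_0^-$, $y_{1,j}\mapsto A_1^+$, $z_{1,j}\mapsto A_1^-$; $Id_2^\#(A)$ denotes their set. $P_n^{grs}$ is the span of the monomials $w_{\sigma(1)}\cdots w_{\sigma(n)}$, $\sigma\in S_n$, $w_i\in\{y_{0,i},z_{0,i},y_{1,i},z_{1,i}\}$,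 and $c_n^{grs}(A)=\dim P_n^{grs}/(P_n^{grs}\cap Id_2^\#(A))$. *)

theory Defs
  imports Complex_Main "HOL-Library.Function_Algebras"
begin

text \<open>The algebra A is the whole carrier type 'a (class ring = associative, not
necessarily unital ring), with F-scalar multiplication sc.\<close>

definition assoc_algebra :: "('f::field \<Rightarrow> 'a::ring \<Rightarrow> 'a) \<Rightarrow> bool" where
  "assoc_algebra sc \<longleftrightarrow> module sc \<and>
     (\<forall>c a b. sc c (a * b) = sc c a * b \<and> sc c (a * b) = a * sc c b)"

text \<open>Z2-grading: Ag False = A_0, Ag True = A_1 (degree True means odd).\<close>

definition superalgebra :: "('f::field \<Rightarrow> 'a::ring \<Rightarrow> 'a) \<Rightarrow> (bool \<Rightarrow> 'a set) \<Rightarrow> bool" where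
  "superalgebra sc Ag \<longleftrightarrow> assoc_algebra sc \<and>
     (\<forall>i. module.subspace sc (Ag i)) \<and>
     (\<forall>a. \<exists>!p. fst p \<in> Ag False \<and> snd p \<in> Ag True \<and> a = fst p + snd p) \<and>
     (\<forall>i j a b. a \<in> Ag i \<longrightarrow> b \<in> Ag j \<longrightarrow> a * b \<in> Ag (i \<noteq> j))"

definition graded_linear_involutive ::
  "('f::field \<Rightarrow> 'a::ring \<Rightarrow> 'a) \<Rightarrow> (bool \<Rightarrow> 'a set) \<Rightarrow> ('a \<Rightarrow> 'a) \<Rightarrow> bool" where
  "graded_linear_involutive sc Ag star \<longleftrightarrow>
     (\<forall>a b. star (a + b) = star a + star b) \<and> (\<forall>c a. star (sc c a) = sc c (star a)) \<and>
     (\<forall>i a. a \<in> Ag i \<longrightarrow> star a \<in> Ag i) \<and> (\<forall>a. star (star a) = a)"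

definition superinvolution ::
  "('f::field \<Rightarrow> 'a::ring \<Rightarrow> 'a) \<Rightarrow> (bool \<Rightarrow> 'a set) \<Rightarrow> ('a \<Rightarrow> 'a) \<Rightarrow> bool" where
  "superinvolution sc Ag star \<longleftrightarrow> graded_linear_involutive sc Ag star \<and>
     (\<forall>i j a b. a \<in> Ag i \<longrightarrow> b \<in> Ag j \<longrightarrow>
        star (a * b) = (if i \<and> j then - (star b * star a) else star b * star a))"

definition graded_involution ::
  "('f::field \<Rightarrow> 'a::ring \<Rightarrow> 'a) \<Rightarrow> (bool \<Rightarrow> 'a set) \<Rightarrow> ('a \<Rightarrow> 'a) \<Rightarrow> bool" where
  "graded_involution sc Ag star \<longleftrightarrow> graded_linear_involutive sc Ag star \<and>
     (\<forall>a b. star (a * b) = star b * star a)"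

definition sharp_superalgebra ::
  "('f::field \<Rightarrow> 'a::ring \<Rightarrow> 'a) \<Rightarrow> (bool \<Rightarrow> 'a set) \<Rightarrow> ('a \<Rightarrow> 'a) \<Rightarrow> bool" where
  "sharp_superalgebra sc Ag star \<longleftrightarrow> superalgebra sc Ag \<and>
     (superinvolution sc Ag star \<or> graded_involution sc Ag star)"

text \<open>An element of the free non-unital algebra on variables 'v is a finitely supported
coefficient function on words, with zero coefficient on the empty word.\<close>

definition free_poly :: "('v list \<Rightarrow> 'f::field) \<Rightarrow> bool" where
  "free_poly p \<longleftrightarrow> finite {w. p w \<noteq> 0} \<and> p [] = 0"

definition pscale :: "'f::field \<Rightarrow> ('v list \<Rightarrow> 'f) \<Rightarrow> ('v list \<Rightarrow> 'f)" where
  "pscale c p = (\<lambda>w. c * p w)"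

fun eval_word :: "('v \<Rightarrow> 'a::ring) \<Rightarrow> 'v list \<Rightarrow> 'a" where
  "eval_word s [] = 0"
| "eval_word s [x] = s x"
| "eval_word s (x # y # xs) = s x * eval_word s (y # xs)"

definition eval_poly ::
  "('f::field \<Rightarrow> 'a::ring \<Rightarrow> 'a) \<Rightarrow> ('v \<Rightarrow> 'a) \<Rightarrow> ('v list \<Rightarrow> 'f) \<Rightarrow> 'a" where
  "eval_poly sc s p = (\<Sum>w\<in>{w. p w \<noteq> 0}. sc (p w) (eval_word s w))"

definition PI_algebra :: "('f::field \<Rightarrow> 'a::ring \<Rightarrow> 'a) \<Rightarrow> bool" where
  "PI_algebra sc \<longleftrightarrow> (\<exists>p :: nat list \<Rightarrow> 'f. free_poly p \<and> p \<noteq> (\<lambda>_. 0) \<and>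
      (\<forall>s :: nat \<Rightarrow> 'a. eval_poly sc s p = 0))"

text \<open>Y i j = y_{i,j} (symmetric), Z i j = z_{i,j} (skew); i = False/True is degree 0/1.\<close>

datatype svar = Y bool nat | Z bool nat

fun vidx :: "svar \<Rightarrow> nat" where
  "vidx (Y i j) = j"
| "vidx (Z i j) = j"

definition admissible_subst ::
  "(bool \<Rightarrow> 'a::ring set) \<Rightarrow> ('a \<Rightarrow> 'a) \<Rightarrow> (svar \<Rightarrow> 'a) \<Rightarrow> bool" where
  "admissible_subst Ag star s \<longleftrightarrow>
     (\<forall>i j. s (Y i j) \<in> Ag i \<and> star (s (Y i j)) = s (Y i j)) \<and>
     (\<forall>i j. s (Z i j) \<in> Ag i \<and> star (s (Z i j)) = - s (Z i j))"

definition sharp_superids ::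
  "('f::field \<Rightarrow> 'a::ring \<Rightarrow> 'a) \<Rightarrow> (bool \<Rightarrow> 'a set) \<Rightarrow> ('a \<Rightarrow> 'a) \<Rightarrow> (svar list \<Rightarrow> 'f) set" where
  "sharp_superids sc Ag star = {p. free_poly p \<and>
      (\<forall>s. admissible_subst Ag star s \<longrightarrow> eval_poly sc s p = 0)}"

definition multilinear_words :: "nat \<Rightarrow> svar list set" where
  "multilinear_words n = {w. length w = n \<and> set (map vidx w) = {1..n}}"

definition P_grs :: "nat \<Rightarrow> (svar list \<Rightarrow> 'f::field) set" where
  "P_grs n = {p. \<forall>w. p w \<noteq> 0 \<longrightarrow> w \<in> multilinear_words n}"

text \<open>dim (P_n / (P_n \<inter> Id)) = dim P_n - dim (P_n \<inter> Id), P_n being finite dimensional.\<close>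

definition c_grs ::
  "('f::field \<Rightarrow> 'a::ring \<Rightarrow> 'a) \<Rightarrow> (bool \<Rightarrow> 'a set) \<Rightarrow> ('a \<Rightarrow> 'a) \<Rightarrow> nat \<Rightarrow> nat" where
  "c_grs sc Ag star n =
     vector_space.dim (pscale :: 'f \<Rightarrow> _) (P_grs n) -
     vector_space.dim (pscale :: 'f \<Rightarrow> _) (P_grs n \<inter> sharp_superids sc Ag star)"

end

(*
  Multilinearising a
  nonzero identity gives one of some degree d, sum over permutations phi of beta phi x_phi(1)...x_phi(d),
  in which x_1...x_d has a nonzero coefficient. Substituting consecutive subwords for its variables
  shows (Latyshev) that a multilinear monomial whose index sequence has an increasing subsequence of
  length d is, modulo identities, a combination of lexicographically larger monomials, so P_n modulo
  identities is spanned by the monomials without such subsequences. Colouring each position by the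
  length of the longest increasing subsequence ending there splits such an index sequence into
  d - 1 decreasing ones, and the sequence is recovered from the colours of its positions and of its
  values. Hence there are at most (d - 1)^(2n) index sequences, and with 4 kinds of variable per
  position c_n <= (4 (d - 1)^2)^n.
*)
theory Submission
  imports Defs "HOL-Combinatorics.Multiset_Permutations"
begin

locale nonunital_algebra = vector_space scale for scale :: "'f::field \<Rightarrow> 'a::ring \<Rightarrow> 'a" +
  assumes scale_mult_left: "scale c (a * b) = scale c a * b"
    and scale_mult_right: "scale c (a * b) = a * scale c b"

lemma assoc_algebra_imp_nonunital_algebra: "assoc_algebra sc \<Longrightarrow> nonunital_algebra sc"
  unfolding assoc_algebra_def nonunital_algebra_def nonunital_algebra_axioms_def vector_space_def module_def
  by blast

lemma eval_word_Cons: "ys \<noteq> [] \<Longrightarrow> eval_word s (x # ys) = s x * eval_word s ys"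
  by (cases ys) auto

lemma eval_word_append:
  "xs \<noteq> [] \<Longrightarrow> ys \<noteq> [] \<Longrightarrow> eval_word s (xs @ ys) = eval_word s xs * eval_word s ys"
proof (induction xs)
  case (Cons x xs)
  then show ?case by (cases "xs = []") (simp_all add: eval_word_Cons mult.assoc)
qed simp

lemma eval_word_concat:
  "(\<And>j. j \<in> set js \<Longrightarrow> blk j \<noteq> []) \<Longrightarrow>
   eval_word s (concat (map blk js)) = eval_word (\<lambda>j. eval_word s (blk j)) js"
proof (induction js)
  case (Cons j js)
  then show ?case
    by (cases "js = []") (auto simp: eval_word_append eval_word_Cons)
qed simp

section \<open>Multilinearisation\<close>

definition index_lists :: "'v list \<Rightarrow> nat set \<Rightarrow> 'v list \<Rightarrow> nat list set" where
  "index_lists m S w = {\<phi>. length \<phi> = length w \<and> set \<phi> \<subseteq> S \<and> map ((!) m) \<phi> = w}"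

lemma finite_index_lists: "finite S \<Longrightarrow> finite (index_lists m S w)"
  by (rule finite_subset[OF _ finite_lists_length_eq[of S "length w"]]) (auto simp: index_lists_def)

lemma index_lists_Cons:
  "index_lists m S (x # w) = (\<lambda>(q, \<phi>). q # \<phi>) ` ({q \<in> S. m ! q = x} \<times> index_lists m S w)"
  by (auto simp: index_lists_def length_Suc_conv)

lemma eval_word_sum_subst:
  assumes "finite S"
  shows "eval_word (\<lambda>x. \<Sum>q | q \<in> S \<and> m ! q = x. a q) w = (\<Sum>\<phi>\<in>index_lists m S w. eval_word a \<phi>)"
proof (induction w)
  case Nil
  have "index_lists m S [] = {[]}" by (auto simp: index_lists_def)
  then show ?case by simp
next
  case (Cons x w)
  have inj: "inj_on (\<lambda>(q, \<phi>). q # \<phi>) ({q \<in> S. m ! q = x} \<times> index_lists m S w)"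
    by (auto simp: inj_on_def)
  show ?case
  proof (cases "w = []")
    case True
    have "index_lists m S [x] = (\<lambda>q. [q]) ` {q \<in> S. m ! q = x}"
      by (auto simp: index_lists_def length_Suc_conv)
    then show ?thesis using True by (simp add: sum.reindex inj_on_def)
  next
    case False
    then have ne: "\<phi> \<noteq> []" if "\<phi> \<in> index_lists m S w" for \<phi>
      using that by (auto simp: index_lists_def)
    have "eval_word (\<lambda>x. \<Sum>q | q \<in> S \<and> m ! q = x. a q) (x # w)
        = (\<Sum>q | q \<in> S \<and> m ! q = x. \<Sum>\<phi>\<in>index_lists m S w. a q * eval_word a \<phi>)"
      using False Cons.IH
      by (simp add: eval_word_Cons sum_distrib_left sum_distrib_right sum.swap[of _ "index_lists m S w"])
    also have "\<dots> = (\<Sum>q | q \<in> S \<and> m ! q = x. \<Sum>\<phi>\<in>index_lists m S w. eval_word a (q # \<phi>))"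
      by (simp add: eval_word_Cons ne)
    also have "\<dots> = (\<Sum>(q, \<phi>)\<in>{q \<in> S. m ! q = x} \<times> index_lists m S w. eval_word a (q # \<phi>))"
      by (rule sum.cartesian_product)
    also have "\<dots> = (\<Sum>\<phi>\<in>index_lists m S (x # w). eval_word a \<phi>)"
      unfolding index_lists_Cons by (subst sum.reindex[OF inj]) (simp add: case_prod_unfold)
    finally show ?thesis .
  qed
qed

lemma sum_supersets_neg_one_power:
  assumes "finite U" "T \<subseteq> U"
  shows "(\<Sum>S | S \<subseteq> U \<and> T \<subseteq> S. (-1::'r::ring_1) ^ card S) = (if T = U then (-1) ^ card U else 0)"
proof (cases "T = U")
  case True
  then have "{S. S \<subseteq> U \<and> T \<subseteq> S} = {U}" by auto
  then show ?thesis using True by simp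
next
  case False
  then have "T \<subset> U" using assms by auto
  have "finite {S. S \<subseteq> U \<and> T \<subseteq> S}"
    by (rule finite_subset[of _ "Pow U"]) (use assms in auto)
  then have "(\<Sum>S | S \<subseteq> U \<and> T \<subseteq> S. (-1::'r) ^ card S) = 0"
    by (rule sum_alternating_cancels)
       (use card_subsupersets_even_odd[OF assms(1) \<open>T \<subset> U\<close>] in simp)
  then show ?thesis using False by simp
qed

lemma (in module) inclusion_exclusion_index_lists:
  assumes "finite U"
  shows "(\<Sum>S\<in>Pow U. scale ((-1) ^ card S) (\<Sum>\<phi>\<in>index_lists m S w. E \<phi>))
       = scale ((-1) ^ card U) (\<Sum>\<phi> | \<phi> \<in> index_lists m U w \<and> set \<phi> = U. E \<phi>)"
proof -
  have restrict: "index_lists m S w = {\<phi> \<in> index_lists m U w. set \<phi> \<subseteq> S}" if "S \<subseteq> U" for S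
    using that by (auto simp: index_lists_def)
  have "(\<Sum>S\<in>Pow U. scale ((-1) ^ card S) (\<Sum>\<phi>\<in>index_lists m S w. E \<phi>))
      = (\<Sum>S\<in>Pow U. \<Sum>\<phi> | \<phi> \<in> index_lists m U w \<and> set \<phi> \<subseteq> S. scale ((-1) ^ card S) (E \<phi>))"
    by (intro sum.cong refl, subst restrict) (auto simp: scale_sum_right)
  also have "\<dots> = (\<Sum>\<phi>\<in>index_lists m U w. \<Sum>S | S \<in> Pow U \<and> set \<phi> \<subseteq> S. scale ((-1) ^ card S) (E \<phi>))"
    using assms by (intro sum.swap_restrict finite_index_lists) auto
  also have "\<dots> = (\<Sum>\<phi>\<in>index_lists m U w. scale (\<Sum>S | S \<subseteq> U \<and> set \<phi> \<subseteq> S. (-1) ^ card S) (E \<phi>))"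
    by (simp add: scale_sum_left)
  also have "\<dots> = (\<Sum>\<phi>\<in>index_lists m U w. if set \<phi> = U then scale ((-1) ^ card U) (E \<phi>) else 0)"
    using assms by (intro sum.cong refl) (simp add: sum_supersets_neg_one_power index_lists_def)
  also have "\<dots> = scale ((-1) ^ card U) (\<Sum>\<phi> | \<phi> \<in> index_lists m U w \<and> set \<phi> = U. E \<phi>)"
    by (simp add: sum.inter_filter[symmetric] assms finite_index_lists scale_sum_right)
  finally show ?thesis .
qed

lemma index_lists_onto:
  assumes "length w \<le> d"
  shows "{\<phi> \<in> index_lists m {0..<d} w. set \<phi> = {0..<d}}
       = {\<phi> \<in> permutations_of_set {0..<d}. map ((!) m) \<phi> = w}"
proof (intro set_eqI iffI)
  fix \<phi> assume "\<phi> \<in> {\<phi> \<in> index_lists m {0..<d} w. set \<phi> = {0..<d}}"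
  then have \<phi>: "length \<phi> = length w" "set \<phi> = {0..<d}" "map ((!) m) \<phi> = w"
    by (auto simp: index_lists_def)
  then have "card (set \<phi>) = length \<phi>"
    using assms card_length[of \<phi>] by simp
  then have "distinct \<phi>" by (rule card_distinct)
  then show "\<phi> \<in> {\<phi> \<in> permutations_of_set {0..<d}. map ((!) m) \<phi> = w}"
    using \<phi> by (simp add: permutations_of_set_def)
next
  fix \<phi> assume "\<phi> \<in> {\<phi> \<in> permutations_of_set {0..<d}. map ((!) m) \<phi> = w}"
  then show "\<phi> \<in> {\<phi> \<in> index_lists m {0..<d} w. set \<phi> = {0..<d}}"
    by (auto simp: index_lists_def permutations_of_set_def)
qed

lemma sum_fibres:
  assumes "finite W" "finite P"
  shows "(\<Sum>w\<in>W. \<Sum>\<phi> | \<phi> \<in> P \<and> g \<phi> = w. f \<phi>) = (\<Sum>\<phi> | \<phi> \<in> P \<and> g \<phi> \<in> W. f \<phi>)"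
proof -
  have "(\<Sum>w\<in>W. \<Sum>\<phi> | \<phi> \<in> P \<and> g \<phi> = w. f \<phi>) = (\<Sum>w\<in>W. \<Sum>\<phi> | \<phi> \<in> {\<phi> \<in> P. g \<phi> \<in> W} \<and> g \<phi> = w. f \<phi>)"
    by (intro sum.cong) auto
  also have "\<dots> = (\<Sum>\<phi> | \<phi> \<in> P \<and> g \<phi> \<in> W. f \<phi>)"
    by (rule sum.group) (auto simp: assms)
  finally show ?thesis .
qed

lemma (in nonunital_algebra) alternating_sum_substitutions:
  assumes fin: "finite {w. p w \<noteq> 0}" and short: "\<And>w. p w \<noteq> 0 \<Longrightarrow> length w \<le> d"
  shows "(\<Sum>S\<in>Pow {0..<d}. scale ((-1) ^ card S) (eval_poly scale (\<lambda>x. \<Sum>q | q \<in> S \<and> m ! q = x. a q) p))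
       = scale ((-1) ^ d) (\<Sum>\<phi>\<in>permutations_of_set {0..<d}. scale (p (map ((!) m) \<phi>)) (eval_word a \<phi>))"
proof -
  let ?U = "{0..<d}" and ?W = "{w. p w \<noteq> 0}" and ?P = "permutations_of_set {0..<d}"
    and ?E = "eval_word a"
  have "(\<Sum>S\<in>Pow ?U. scale ((-1) ^ card S) (eval_poly scale (\<lambda>x. \<Sum>q | q \<in> S \<and> m ! q = x. a q) p))
      = (\<Sum>S\<in>Pow ?U. scale ((-1) ^ card S) (\<Sum>w\<in>?W. scale (p w) (\<Sum>\<phi>\<in>index_lists m S w. ?E \<phi>)))"
  proof (intro sum.cong refl)
    fix S assume "S \<in> Pow ?U"
    then have "finite S" by (auto intro: finite_subset)
    then show "scale ((-1) ^ card S) (eval_poly scale (\<lambda>x. \<Sum>q | q \<in> S \<and> m ! q = x. a q) p)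
        = scale ((-1) ^ card S) (\<Sum>w\<in>?W. scale (p w) (\<Sum>\<phi>\<in>index_lists m S w. ?E \<phi>))"
      by (simp add: eval_poly_def eval_word_sum_subst)
  qed
  also have "\<dots> = (\<Sum>w\<in>?W. scale (p w) (\<Sum>S\<in>Pow ?U. scale ((-1) ^ card S) (\<Sum>\<phi>\<in>index_lists m S w. ?E \<phi>)))"
    by (simp add: scale_sum_right scale_left_commute mult.commute sum.swap[of _ ?W])
  also have "\<dots> = (\<Sum>w\<in>?W. scale (p w) (scale ((-1) ^ d) (\<Sum>\<phi> | \<phi> \<in> ?P \<and> map ((!) m) \<phi> = w. ?E \<phi>)))"
    by (intro sum.cong refl) (simp add: inclusion_exclusion_index_lists index_lists_onto short)
  also have "\<dots> = scale ((-1) ^ d) (\<Sum>w\<in>?W. \<Sum>\<phi> | \<phi> \<in> ?P \<and> map ((!) m) \<phi> = w. scale (p (map ((!) m) \<phi>)) (?E \<phi>))"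
    by (simp add: scale_sum_right scale_left_commute mult.commute)
  also have "\<dots> = scale ((-1) ^ d) (\<Sum>\<phi> | \<phi> \<in> ?P \<and> map ((!) m) \<phi> \<in> ?W. scale (p (map ((!) m) \<phi>)) (?E \<phi>))"
    by (subst sum_fibres) (simp_all add: fin)
  also have "\<dots> = scale ((-1) ^ d) (\<Sum>\<phi>\<in>?P. scale (p (map ((!) m) \<phi>)) (?E \<phi>))"
    by (rule arg_cong[where f = "scale _"], rule sum.mono_neutral_left) auto
  finally show ?thesis .
qed

definition multilinear_identity :: "('f::field \<Rightarrow> 'a::ring \<Rightarrow> 'a) \<Rightarrow> nat \<Rightarrow> (nat list \<Rightarrow> 'f) \<Rightarrow> bool" where
  "multilinear_identity scale d \<beta> \<longleftrightarrow> 0 < d \<and> \<beta> [0..<d] \<noteq> 0 \<and>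
     (\<forall>a. (\<Sum>\<phi>\<in>permutations_of_set {0..<d}. scale (\<beta> \<phi>) (eval_word a \<phi>)) = 0)"

text \<open>Multilinearisation: m is a longest word of p, and the alternating sum of the substitutions
  replacing the letter x by the sum of those a q, q \<in> S, for which m ! q = x kills every word of p
  except the rearrangements of m.\<close>

lemma (in nonunital_algebra) multilinear_identity_exists:
  assumes p: "free_poly p" "p \<noteq> (\<lambda>_. 0)" and p_id: "\<forall>s. eval_poly scale s p = 0"
  shows "\<exists>d \<beta>. multilinear_identity scale d \<beta>"
proof -
  define W where "W = {w. p w \<noteq> 0}"
  have finW: "finite W" and "p [] = 0" and "W \<noteq> {}"
    using p by (auto simp: free_poly_def W_def fun_eq_iff)
  define d where "d = Max (length ` W)"
  have "d \<in> length ` W"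
    unfolding d_def using finW \<open>W \<noteq> {}\<close> by (intro Max_in) auto
  then obtain m where mW: "m \<in> W" and md: "length m = d" by auto
  have short: "length w \<le> d" if "p w \<noteq> 0" for w
    using that finW unfolding d_def W_def by auto
  have "0 < d" using mW md \<open>p [] = 0\<close> by (cases m) (auto simp: W_def)
  define \<beta> where "\<beta> \<phi> = p (map ((!) m) \<phi>)" for \<phi>
  have "\<beta> [0..<d] \<noteq> 0"
    using mW md map_nth[of m] by (simp add: \<beta>_def W_def)
  moreover have "(\<Sum>\<phi>\<in>permutations_of_set {0..<d}. scale (\<beta> \<phi>) (eval_word a \<phi>)) = 0" for a
    using alternating_sum_substitutions[OF finW[unfolded W_def] short, where m = m and a = a] p_id
    by (simp add: \<beta>_def scale_eq_0_iff)
  ultimately show ?thesis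
    using \<open>0 < d\<close> unfolding multilinear_identity_def by blast
qed

text \<open>The cut list c splits u into the prefix take (c ! 0) u and the blocks u[c ! j ..< c ! Suc j];
  permute_blocks keeps the prefix and concatenates the blocks in the order \<phi>.\<close>

definition block :: "'v list \<Rightarrow> nat list \<Rightarrow> nat \<Rightarrow> 'v list" where
  "block u c j = drop (c ! j) (take (c ! Suc j) u)"

definition permute_blocks :: "'v list \<Rightarrow> nat list \<Rightarrow> nat list \<Rightarrow> 'v list" where
  "permute_blocks u c \<phi> = take (c ! 0) u @ concat (map (block u c) \<phi>)"

lemma take_concat_blocks:
  assumes "sorted_wrt (<) c" "k < length c"
  shows "take (c ! 0) u @ concat (map (block u c) [0..<k]) = take (c ! k) u"
  using assms(2)
proof (induction k)
  case (Suc k)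
  have "c ! k \<le> c ! Suc k"
    using sorted_wrt_nth_less[OF assms(1), of k "Suc k"] Suc.prems by simp
  then have "take (c ! k) u @ block u c k = take (c ! Suc k) u"
    unfolding block_def by (metis append_take_drop_id min.absorb1 take_take)
  moreover have "take (c ! 0) u @ concat (map (block u c) [0..<k]) = take (c ! k) u"
    using Suc by simp
  ultimately show ?case by (simp flip: append_assoc)
qed simp

lemma permute_blocks_id:
  assumes "sorted_wrt (<) c" "length c = Suc d" "c ! d = length u"
  shows "permute_blocks u c [0..<d] = u"
  using take_concat_blocks[OF assms(1), of d u] assms(2,3) by (simp add: permute_blocks_def)

lemma mset_permute_blocks:
  assumes "\<phi> \<in> permutations_of_set {0..<d}"
  shows "mset (permute_blocks u c \<phi>) = mset (permute_blocks u c [0..<d])"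
proof -
  have "mset \<phi> = mset [0..<d]"
    using assms set_eq_iff_mset_eq_distinct[of \<phi> "[0..<d]"] by (simp add: permutations_of_set_def)
  moreover have "mset (concat (map (block u c) \<psi>)) = sum_mset (image_mset (mset \<circ> block u c) (mset \<psi>))"
    for \<psi> by (induction \<psi>) auto
  ultimately show ?thesis by (simp add: permute_blocks_def)
qed

lemma block_cut_Cons:
  assumes "sorted_wrt (<) I" "\<forall>i\<in>set I. i < length u" "j < length I"
  obtains t where "block u (I @ [length u]) j = u ! (I ! j) # t"
proof -
  define c where "c = I @ [length u]"
  have "c ! j < c ! Suc j"
    using assms by (simp add: c_def sorted_wrt_append nth_append sorted_wrt_nth_less)
  moreover have "c ! Suc j \<le> length u"
  proof (cases "Suc j = length I")
    case False
    then have "Suc j < length I" using assms(3) by simp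
    then have "I ! Suc j < length u" using assms(2) nth_mem by blast
    then show ?thesis using \<open>Suc j < length I\<close> by (simp add: c_def nth_append)
  qed (simp add: c_def)
  ultimately have "block u c j = u ! (c ! j) # drop (Suc (c ! j)) (take (c ! Suc j) u)"
    by (simp add: block_def Cons_nth_drop_Suc[symmetric])
  then show ?thesis using that assms(3) by (simp add: c_def nth_append)
qed

lemma permutation_first_moved:
  assumes "\<phi> \<in> permutations_of_set {0..<d}" "\<phi> \<noteq> [0..<d]"
  obtains k j \<psi> where "\<phi> = [0..<k] @ j # \<psi>" "k < j" "j < d"
proof -
  have len: "length \<phi> = d"
    using length_finite_permutations_of_set[OF assms(1)] by simp
  have dist: "distinct \<phi>" and set: "set \<phi> = {0..<d}"
    using assms(1) by (auto simp: permutations_of_set_def)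
  have "\<exists>k<d. \<phi> ! k \<noteq> k"
  proof (rule ccontr)
    assume "\<not> (\<exists>k<d. \<phi> ! k \<noteq> k)"
    then have "\<phi> = [0..<d]" using len by (intro nth_equalityI) auto
    then show False using assms(2) by simp
  qed
  then obtain k where k: "k < d" "\<phi> ! k \<noteq> k" and below: "\<And>i. i < k \<Longrightarrow> \<phi> ! i = i"
    using exists_least_iff[of "\<lambda>k. k < d \<and> \<phi> ! k \<noteq> k"] by (metis order.strict_trans)
  have prefix: "take k \<phi> = [0..<k]"
    using k len below by (intro nth_equalityI) auto
  have "k \<le> \<phi> ! k"
  proof (rule ccontr)
    assume "\<not> k \<le> \<phi> ! k"
    then have "\<phi> ! (\<phi> ! k) = \<phi> ! k" using below by simp
    then show False using dist k len \<open>\<not> k \<le> \<phi> ! k\<close> by (simp add: nth_eq_iff_index_eq)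
  qed
  moreover have "\<phi> ! k < d" using set k len nth_mem[of k \<phi>] by auto
  moreover have "\<phi> = [0..<k] @ \<phi> ! k # drop (Suc k) \<phi>"
    using id_take_nth_drop[of k \<phi>] k len prefix by simp
  ultimately show ?thesis using that k(2) by (simp add: le_neq_implies_less)
qed

text \<open>Cutting u at the positions I of a subsequence that increases under f, every nontrivial
  permutation of the blocks makes the word larger lexicographically: the first moved block starts
  with a larger letter than the block it replaces.\<close>

lemma lexord_permute_blocks:
  assumes I: "sorted_wrt (<) I" "\<forall>i\<in>set I. i < length u" "sorted_wrt (<) (map (\<lambda>i. f (u ! i)) I)"
    and \<phi>: "\<phi> \<in> permutations_of_set {0..<length I}" "\<phi> \<noteq> [0..<length I]"
  shows "(map f u, map f (permute_blocks u (I @ [length u]) \<phi>)) \<in> lexord less_than"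
proof -
  define d where "d = length I"
  define c where "c = I @ [length u]"
  have c: "sorted_wrt (<) c" "length c = Suc d" "c ! d = length u"
    using I by (auto simp: c_def d_def sorted_wrt_append nth_append)
  obtain k j \<psi> where \<phi>_eq: "\<phi> = [0..<k] @ j # \<psi>" and kj: "k < j" "j < d"
    using permutation_first_moved \<phi> unfolding d_def by blast
  obtain tk tj where tk: "block u c k = u ! (I ! k) # tk" and tj: "block u c j = u ! (I ! j) # tj"
    using block_cut_Cons[OF I(1,2)] kj unfolding c_def d_def by (metis order.strict_trans)
  define X where "X = take (c ! 0) u @ concat (map (block u c) [0..<k])"
  have "[0..<d] = [0..<k] @ k # [Suc k..<d]"
    using kj upt_add_eq_append[of 0 k "d - k"] upt_conv_Cons[of k d] by simp
  then have u_eq: "u = X @ u ! (I ! k) # tk @ concat (map (block u c) [Suc k..<d])"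
    using permute_blocks_id[OF c] tk by (simp add: permute_blocks_def X_def)
  have \<phi>_word: "permute_blocks u c \<phi> = X @ u ! (I ! j) # tj @ concat (map (block u c) \<psi>)"
    using tj by (simp add: permute_blocks_def X_def \<phi>_eq)
  have "f (u ! (I ! k)) < f (u ! (I ! j))"
    using sorted_wrt_nth_less[OF I(3), of k j] kj by (simp add: d_def)
  then show ?thesis
    by (subst u_eq, subst \<phi>_word[unfolded c_def]) (simp add: lexord_same_pref_iff)
qed

lemma eval_word_permute_blocks:
  assumes "\<And>j. j \<in> set \<phi> \<Longrightarrow> block u c j \<noteq> []" "\<phi> \<noteq> []"
  shows "eval_word s (permute_blocks u c \<phi>) =
    (if take (c ! 0) u = [] then eval_word (\<lambda>j. eval_word s (block u c j)) \<phi>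
     else eval_word s (take (c ! 0) u) * eval_word (\<lambda>j. eval_word s (block u c j)) \<phi>)"
proof -
  have blocks: "concat (map (block u c) \<phi>) \<noteq> []"
    using assms by (cases \<phi>) auto
  have concat: "eval_word s (concat (map (block u c) \<phi>)) = eval_word (\<lambda>j. eval_word s (block u c j)) \<phi>"
    using eval_word_concat[of \<phi> "block u c", OF assms(1)] .
  show ?thesis
  proof (cases "take (c ! 0) u = []")
    case True
    then show ?thesis unfolding permute_blocks_def True using concat by simp
  next
    case False
    then show ?thesis unfolding permute_blocks_def
      using eval_word_append[OF False blocks, of s] concat by simp
  qed
qed

lemma multilinear_words_mset:
  assumes "mset v = mset u" "u \<in> multilinear_words n"
  shows "v \<in> multilinear_words n"
proof -
  have "length v = length u" using assms(1) by (rule mset_eq_length)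
  moreover have "set v = set u" using assms(1) by (rule mset_eq_setD)
  ultimately show ?thesis using assms(2) by (simp add: multilinear_words_def)
qed

section \<open>Reduction modulo identities\<close>

definition monomial :: "'v list \<Rightarrow> 'v list \<Rightarrow> 'f::zero_neq_one" where
  "monomial w = (\<lambda>v. if v = w then 1 else 0)"

definition poly_identities :: "('f::field \<Rightarrow> 'a::ring \<Rightarrow> 'a) \<Rightarrow> ('v list \<Rightarrow> 'f) set" where
  "poly_identities scale = {g. free_poly g \<and> (\<forall>s. eval_poly scale s g = 0)}"

lemma poly_identities_subset_sharp_superids: "poly_identities sc \<subseteq> sharp_superids sc Ag star"
  by (auto simp: poly_identities_def sharp_superids_def)

interpretation fpoly: vector_space "pscale :: 'f::field \<Rightarrow> ('v list \<Rightarrow> 'f) \<Rightarrow> ('v list \<Rightarrow> 'f)"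
  unfolding vector_space_def module_def pscale_def by (auto simp: fun_eq_iff algebra_simps)

lemma sum_fun_apply: "(\<Sum>a\<in>A. f a) x = (\<Sum>a\<in>A. f a x)"
  by (induction A rule: infinite_finite_induct) auto

lemma sum_monomials_apply:
  "(\<Sum>\<phi>\<in>\<Phi>. pscale (\<beta> \<phi>) (monomial (w \<phi>))) v = (\<Sum>\<phi>\<in>\<Phi>. if v = w \<phi> then \<beta> \<phi> else 0)"
  by (simp add: sum_fun_apply pscale_def monomial_def if_distrib cong: if_cong)

lemma support_sum_monomials:
  "{v. (\<Sum>\<phi>\<in>\<Phi>. pscale (\<beta> \<phi>) (monomial (w \<phi>))) v \<noteq> 0} \<subseteq> w ` \<Phi>"
  unfolding sum_monomials_apply by (auto elim: sum.not_neutral_contains_not_neutral split: if_splits)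

lemma (in nonunital_algebra) eval_poly_superset:
  assumes "finite W" "{w. p w \<noteq> 0} \<subseteq> W"
  shows "eval_poly scale s p = (\<Sum>w\<in>W. scale (p w) (eval_word s w))"
  unfolding eval_poly_def by (rule sum.mono_neutral_left) (use assms in auto)

lemma (in nonunital_algebra) eval_poly_sum_monomials:
  assumes "finite \<Phi>"
  shows "eval_poly scale s (\<Sum>\<phi>\<in>\<Phi>. pscale (\<beta> \<phi>) (monomial (w \<phi>)))
       = (\<Sum>\<phi>\<in>\<Phi>. scale (\<beta> \<phi>) (eval_word s (w \<phi>)))"
proof -
  let ?g = "\<Sum>\<phi>\<in>\<Phi>. pscale (\<beta> \<phi>) (monomial (w \<phi>))"
  have "eval_poly scale s ?g = (\<Sum>v\<in>w ` \<Phi>. scale (?g v) (eval_word s v))"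
    by (intro eval_poly_superset finite_imageI assms support_sum_monomials)
  also have "\<dots> = (\<Sum>v\<in>w ` \<Phi>. \<Sum>\<phi>\<in>\<Phi>. scale (if v = w \<phi> then \<beta> \<phi> else 0) (eval_word s v))"
    by (simp add: sum_monomials_apply scale_sum_left)
  also have "\<dots> = (\<Sum>\<phi>\<in>\<Phi>. \<Sum>v\<in>w ` \<Phi>. if v = w \<phi> then scale (\<beta> \<phi>) (eval_word s (w \<phi>)) else 0)"
    by (subst sum.swap) (intro sum.cong refl, simp)
  also have "\<dots> = (\<Sum>\<phi>\<in>\<Phi>. scale (\<beta> \<phi>) (eval_word s (w \<phi>)))"
    using assms by (intro sum.cong refl) (simp add: sum.delta)
  finally show ?thesis .
qed

lemma free_poly_sum_monomials:
  assumes "finite \<Phi>" "\<And>\<phi>. \<phi> \<in> \<Phi> \<Longrightarrow> w \<phi> \<noteq> []"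
  shows "free_poly (\<Sum>\<phi>\<in>\<Phi>. pscale (\<beta> \<phi>) (monomial (w \<phi>)))"
proof -
  have support: "{v. (\<Sum>\<phi>\<in>\<Phi>. pscale (\<beta> \<phi>) (monomial (w \<phi>))) v \<noteq> 0} \<subseteq> w ` \<Phi>"
    by (rule support_sum_monomials)
  then have "(\<Sum>\<phi>\<in>\<Phi>. pscale (\<beta> \<phi>) (monomial (w \<phi>))) [] = 0"
    using assms(2) by force
  moreover have "finite {v. (\<Sum>\<phi>\<in>\<Phi>. pscale (\<beta> \<phi>) (monomial (w \<phi>))) v \<noteq> 0}"
    using support by (rule finite_subset) (simp add: assms(1))
  ultimately show ?thesis by (simp add: free_poly_def)
qed

definition block_perm_poly :: "(nat list \<Rightarrow> 'f::field) \<Rightarrow> nat \<Rightarrow> 'v list \<Rightarrow> nat list \<Rightarrow> ('v list \<Rightarrow> 'f)" where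
  "block_perm_poly \<beta> d u c =
     (\<Sum>\<phi>\<in>permutations_of_set {0..<d}. pscale (\<beta> \<phi>) (monomial (permute_blocks u c \<phi>)))"

text \<open>Substituting the block values for the variables of the multilinear identity, and multiplying
  by the prefix on the left, shows that block_perm_poly is an identity.\<close>

lemma (in nonunital_algebra) block_perm_poly_identity:
  assumes ml: "multilinear_identity scale d \<beta>" and blocks: "\<And>j. j < d \<Longrightarrow> block u c j \<noteq> []"
  shows "block_perm_poly \<beta> d u c \<in> poly_identities scale"
proof -
  let ?P = "permutations_of_set {0..<d}"
  have d: "0 < d" and ml_id: "\<And>a. (\<Sum>\<phi>\<in>?P. scale (\<beta> \<phi>) (eval_word a \<phi>)) = 0"
    using ml by (auto simp: multilinear_identity_def)
  have blocks_\<phi>: "\<And>j. j \<in> set \<phi> \<Longrightarrow> block u c j \<noteq> []" and ne: "\<phi> \<noteq> []" if "\<phi> \<in> ?P" for \<phi>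
    using that blocks d by (auto simp: permutations_of_set_def)
  have "permute_blocks u c \<phi> \<noteq> []" if "\<phi> \<in> ?P" for \<phi>
    using blocks_\<phi>[OF that] ne[OF that] by (cases \<phi>) (auto simp: permute_blocks_def)
  then have "free_poly (block_perm_poly \<beta> d u c)"
    unfolding block_perm_poly_def by (intro free_poly_sum_monomials) simp_all
  moreover have "eval_poly scale s (block_perm_poly \<beta> d u c) = 0" for s
  proof -
    define pre where "pre = take (c ! 0) u"
    define a where "a = (\<lambda>j. eval_word s (block u c j))"
    have eval_\<phi>: "eval_word s (permute_blocks u c \<phi>)
        = (if pre = [] then eval_word a \<phi> else eval_word s pre * eval_word a \<phi>)" if "\<phi> \<in> ?P" for \<phi>
      using eval_word_permute_blocks[OF blocks_\<phi>[OF that] ne[OF that], of s]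
      unfolding pre_def[symmetric] a_def[symmetric] .
    have "eval_poly scale s (block_perm_poly \<beta> d u c) = (\<Sum>\<phi>\<in>?P. scale (\<beta> \<phi>) (eval_word s (permute_blocks u c \<phi>)))"
      unfolding block_perm_poly_def by (simp add: eval_poly_sum_monomials)
    also have "\<dots> = (if pre = [] then (\<Sum>\<phi>\<in>?P. scale (\<beta> \<phi>) (eval_word a \<phi>))
                     else eval_word s pre * (\<Sum>\<phi>\<in>?P. scale (\<beta> \<phi>) (eval_word a \<phi>)))"
      by (simp add: eval_\<phi> sum_distrib_left scale_mult_right cong: sum.cong)
    also have "\<dots> = 0" by (simp add: ml_id)
    finally show ?thesis .
  qed
  ultimately show ?thesis by (simp add: poly_identities_def)
qed

definition has_incr_subseq :: "nat \<Rightarrow> 'a::linorder list \<Rightarrow> bool" where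
  "has_incr_subseq d xs \<longleftrightarrow> (\<exists>I. length I = d \<and> sorted_wrt (<) I \<and> (\<forall>i\<in>set I. i < length xs) \<and>
     sorted_wrt (<) (map ((!) xs) I))"

lemma has_incr_subseq_map:
  assumes "has_incr_subseq d (map f u)"
  obtains I where "length I = d" "sorted_wrt (<) I" "\<forall>i\<in>set I. i < length u"
    "sorted_wrt (<) (map (\<lambda>i. f (u ! i)) I)"
proof -
  obtain I where I: "length I = d" "sorted_wrt (<) I" "\<forall>i\<in>set I. i < length u"
      "sorted_wrt (<) (map ((!) (map f u)) I)"
    using assms by (auto simp: has_incr_subseq_def)
  have "sorted_wrt (\<lambda>i j. f (u ! i) < f (u ! j)) I"
    by (rule sorted_wrt_mono_rel[OF _ I(4)[unfolded sorted_wrt_map]]) (use I(3) in auto)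
  then show ?thesis
    using that I(1-3) by (simp add: sorted_wrt_map)
qed

lemma wf_lexord_greater_on:
  assumes "finite A"
  shows "wf {(y, x). x \<in> A \<and> y \<in> A \<and> (f x, f y) \<in> lexord less_than}"
    (is "wf ?R")
proof (rule finite_acyclic_wf)
  show "finite ?R"
    by (rule finite_subset[of _ "A \<times> A"]) (use assms in auto)
  have "trans ?R"
    using lexord_trans[OF _ _ trans_less_than] by (auto simp: trans_def)
  moreover have "irrefl ?R"
    using lexord_irreflexive[of less_than] by (auto simp: irrefl_def)
  ultimately show "acyclic ?R"
    by (simp add: acyclic_irrefl trancl_id)
qed

lemma finite_multilinear_words: "finite (multilinear_words n)"
proof -
  have "{x. vidx x \<le> n} \<subseteq> case_prod Y ` (UNIV \<times> {..n}) \<union> case_prod Z ` (UNIV \<times> {..n})"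
  proof
    fix x :: svar assume "x \<in> {x. vidx x \<le> n}"
    then show "x \<in> case_prod Y ` (UNIV \<times> {..n}) \<union> case_prod Z ` (UNIV \<times> {..n})"
      by (cases x) force+
  qed
  then have "finite {x. vidx x \<le> n}" by (rule finite_subset) simp
  then have "finite {w. set w \<subseteq> {x. vidx x \<le> n} \<and> length w = n}"
    by (rule finite_lists_length_eq)
  then show ?thesis
    by (rule finite_subset[rotated]) (auto simp: multilinear_words_def)
qed

lemma block_perm_poly_in_P_grs:
  assumes "u \<in> multilinear_words n" "sorted_wrt (<) c" "length c = Suc d" "c ! d = length u"
  shows "block_perm_poly \<beta> d u c \<in> P_grs n"
proof -
  have "permute_blocks u c \<phi> \<in> multilinear_words n" if "\<phi> \<in> permutations_of_set {0..<d}" for \<phi>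
  proof (rule multilinear_words_mset[OF _ assms(1)])
    show "mset (permute_blocks u c \<phi>) = mset u"
      using mset_permute_blocks[OF that, of u c] permute_blocks_id[OF assms(2-4)] by simp
  qed
  then show ?thesis
    using support_sum_monomials unfolding P_grs_def block_perm_poly_def by blast
qed

text \<open>Latyshev's argument: block_perm_poly is an identity in which u has the nonzero coefficient
  \<beta> [0..<d] and all other monomials are lexicographically larger.\<close>

lemma (in nonunital_algebra) monomial_in_span_lexord_greater:
  assumes ml: "multilinear_identity scale d \<beta>" and u: "u \<in> multilinear_words n"
    and incr: "has_incr_subseq d (map vidx u)"
  shows "monomial u \<in> fpoly.span (monomial ` {v \<in> multilinear_words n. (map vidx u, map vidx v) \<in> lexord less_than}
           \<union> (P_grs n \<inter> poly_identities scale))"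
    (is "_ \<in> fpoly.span ?B")
proof -
  obtain I where I: "length I = d" "sorted_wrt (<) I" "\<forall>i\<in>set I. i < length u"
      and I_vidx: "sorted_wrt (<) (map (\<lambda>i. vidx (u ! i)) I)"
    using incr by (rule has_incr_subseq_map)
  define c where "c = I @ [length u]"
  let ?P = "permutations_of_set {0..<d}"
  have c: "sorted_wrt (<) c" "length c = Suc d" "c ! d = length u"
    using I by (auto simp: c_def sorted_wrt_append nth_append)
  have "block u c j \<noteq> []" if j: "j < d" for j
  proof -
    obtain t where "block u c j = u ! (I ! j) # t"
      unfolding c_def by (rule block_cut_Cons[OF I(2,3)]) (use j I(1) in simp)
    then show ?thesis by simp
  qed
  then have g: "block_perm_poly \<beta> d u c \<in> fpoly.span ?B"
    using block_perm_poly_identity[OF ml] block_perm_poly_in_P_grs[OF u c]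
    by (intro fpoly.span_base) auto
  have "monomial (permute_blocks u c \<phi>) \<in> fpoly.span ?B" if "\<phi> \<in> ?P - {[0..<d]}" for \<phi>
  proof (intro fpoly.span_base UnI1 imageI CollectI conjI)
    have "mset (permute_blocks u c \<phi>) = mset u"
      using that mset_permute_blocks[of \<phi> d u c] permute_blocks_id[OF c] by simp
    then show "permute_blocks u c \<phi> \<in> multilinear_words n"
      using multilinear_words_mset u by blast
    show "(map vidx u, map vidx (permute_blocks u c \<phi>)) \<in> lexord less_than"
      using lexord_permute_blocks[OF I(2,3) I_vidx] that I(1) by (simp add: c_def)
  qed
  then have rest: "(\<Sum>\<phi>\<in>?P - {[0..<d]}. pscale (\<beta> \<phi>) (monomial (permute_blocks u c \<phi>))) \<in> fpoly.span ?B"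
    (is "?rest \<in> _") by (intro fpoly.span_sum fpoly.span_scale)
  have "block_perm_poly \<beta> d u c = pscale (\<beta> [0..<d]) (monomial (permute_blocks u c [0..<d])) + ?rest"
    unfolding block_perm_poly_def
    by (rule sum.remove[OF finite_permutations_of_set]) (simp add: permutations_of_set_def)
  then have "monomial u = pscale (inverse (\<beta> [0..<d])) (block_perm_poly \<beta> d u c - ?rest)"
    using ml by (simp add: permute_blocks_id[OF c] multilinear_identity_def fun_eq_iff pscale_def)
  then show ?thesis
    using g rest by (simp add: fpoly.span_diff fpoly.span_scale)
qed

lemma (in nonunital_algebra) monomial_in_span_incr_free:
  assumes ml: "multilinear_identity scale d \<beta>" and u: "u \<in> multilinear_words n"
  shows "monomial u \<in> fpoly.span (monomial ` {v \<in> multilinear_words n. \<not> has_incr_subseq d (map vidx v)}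
           \<union> (P_grs n \<inter> poly_identities scale))"
    (is "_ \<in> fpoly.span ?B")
proof -
  have "wf {(v, u). u \<in> multilinear_words n \<and> v \<in> multilinear_words n \<and>
      (map vidx u, map vidx v) \<in> lexord less_than}"
    by (rule wf_lexord_greater_on[OF finite_multilinear_words])
  then show ?thesis using u
  proof (induction u rule: wf_induct_rule)
    case (less u)
    show ?case
    proof (cases "has_incr_subseq d (map vidx u)")
      case False
      then show ?thesis using less.prems by (intro fpoly.span_base) auto
    next
      case True
      have "monomial ` {v \<in> multilinear_words n. (map vidx u, map vidx v) \<in> lexord less_than}
          \<union> (P_grs n \<inter> poly_identities scale) \<subseteq> fpoly.span ?B"
        using less.IH less.prems fpoly.span_base[of _ ?B] by blast
      then have "fpoly.span (monomial ` {v \<in> multilinear_words n. (map vidx u, map vidx v) \<in> lexord less_than}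
          \<union> (P_grs n \<inter> poly_identities scale)) \<subseteq> fpoly.span ?B"
        by (intro fpoly.span_minimal fpoly.subspace_span)
      then show ?thesis
        using monomial_in_span_lexord_greater[OF ml less.prems True] by blast
    qed
  qed
qed

lemma P_grs_subset_span: "P_grs n \<subseteq> fpoly.span (monomial ` multilinear_words n)"
proof
  fix p :: "svar list \<Rightarrow> 'f::field" assume p: "p \<in> P_grs n"
  have "p = (\<Sum>w\<in>multilinear_words n. pscale (p w) (monomial w))"
  proof
    fix v
    have "(\<Sum>w\<in>multilinear_words n. pscale (p w) (monomial w)) v
        = (\<Sum>w\<in>multilinear_words n. if v = w then p w else 0)"
      by (rule sum_monomials_apply)
    also have "\<dots> = p v"
      using p finite_multilinear_words[of n] by (auto simp: P_grs_def sum.delta)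
    finally show "p v = (\<Sum>w\<in>multilinear_words n. pscale (p w) (monomial w)) v" by simp
  qed
  also have "\<dots> \<in> fpoly.span (monomial ` multilinear_words n)"
    by (intro fpoly.span_sum fpoly.span_scale fpoly.span_base) auto
  finally show "p \<in> fpoly.span (monomial ` multilinear_words n)" .
qed

lemma (in vector_space) dim_le_card_add_dim:
  assumes "finite G" "finite F" "Q \<subseteq> span F" "V \<subseteq> span (G \<union> Q)"
  shows "dim V \<le> card G + dim Q"
proof -
  obtain B where B: "B \<subseteq> Q" "independent B" "Q \<subseteq> span B" "card B = dim Q"
    using basis_exists by blast
  have "finite B"
    using independent_span_bound[OF assms(2) B(2)] B(1) assms(3) by blast
  have "G \<union> Q \<subseteq> span (G \<union> B)"
    using B(3) span_superset[of "G \<union> B"] span_mono[of B "G \<union> B"] by blast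
  then have "V \<subseteq> span (G \<union> B)"
    using assms(4) span_mono span_span by (metis subset_trans)
  then have "dim V \<le> card (G \<union> B)"
    using \<open>finite B\<close> assms(1) by (intro dim_le_card) auto
  also have "\<dots> \<le> card G + dim Q"
    using card_Un_le[of G B] B(4) by linarith
  finally show ?thesis .
qed

lemma (in nonunital_algebra) c_grs_le_card_incr_free:
  assumes "multilinear_identity scale d \<beta>"
  shows "c_grs scale Ag star n \<le> card {u \<in> multilinear_words n. \<not> has_incr_subseq d (map vidx u)}"
proof -
  let ?G = "{u \<in> multilinear_words n. \<not> has_incr_subseq d (map vidx u)}"
  let ?M = "monomial ` ?G :: (svar list \<Rightarrow> 'f) set"
    and ?Q = "P_grs n \<inter> sharp_superids scale Ag star"
  have "fpoly.span (?M \<union> (P_grs n \<inter> poly_identities scale)) \<subseteq> fpoly.span (?M \<union> ?Q)"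
    using poly_identities_subset_sharp_superids by (intro fpoly.span_mono) blast
  then have "monomial ` multilinear_words n \<subseteq> fpoly.span (?M \<union> ?Q)"
    using monomial_in_span_incr_free[OF assms] by blast
  then have "P_grs n \<subseteq> fpoly.span (?M \<union> ?Q)"
    using P_grs_subset_span fpoly.span_minimal[OF _ fpoly.subspace_span] by blast
  moreover have "?Q \<subseteq> fpoly.span (monomial ` multilinear_words n)"
    using P_grs_subset_span by blast
  ultimately have "fpoly.dim (P_grs n :: (svar list \<Rightarrow> 'f) set) \<le> card ?M + fpoly.dim ?Q"
    by (intro fpoly.dim_le_card_add_dim) (simp_all add: finite_multilinear_words)
  moreover have "card ?M \<le> card ?G"
    by (rule card_image_le) (simp add: finite_multilinear_words)
  ultimately show ?thesis unfolding c_grs_def by linarith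
qed

section \<open>Sequences without long increasing subsequences\<close>

definition incr_ending_at :: "'a::linorder list \<Rightarrow> nat \<Rightarrow> nat list set" where
  "incr_ending_at xs k =
     {J @ [k] | J. sorted_wrt (<) (J @ [k]) \<and> sorted_wrt (<) (map ((!) xs) (J @ [k]))}"

definition lis_at :: "'a::linorder list \<Rightarrow> nat \<Rightarrow> nat" where
  "lis_at xs k = Max (length ` incr_ending_at xs k)"

lemma incr_ending_atD:
  assumes "I \<in> incr_ending_at xs k" "i \<in> set I"
  shows "i \<le> k" "xs ! i \<le> xs ! k"
proof -
  obtain J where J: "I = J @ [k]" "\<forall>x\<in>set J. x < k \<and> xs ! x < xs ! k"
    using assms(1) by (auto simp: incr_ending_at_def sorted_wrt_append)
  then show "i \<le> k" "xs ! i \<le> xs ! k"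
    using assms(2) by (auto simp: less_imp_le)
qed

lemma length_incr_ending_at: "I \<in> incr_ending_at xs k \<Longrightarrow> length I \<le> Suc k"
proof -
  assume I: "I \<in> incr_ending_at xs k"
  then have "set I \<subseteq> {..k}" using incr_ending_atD(1) by blast
  moreover have "distinct I"
    using I by (auto simp: incr_ending_at_def strict_sorted_iff)
  ultimately show ?thesis
    using card_mono[of "{..k}" "set I"] by (simp add: distinct_card)
qed

lemma finite_lengths_incr_ending_at: "finite (length ` incr_ending_at xs k)"
  by (rule finite_subset[of _ "{..Suc k}"]) (auto dest: length_incr_ending_at)

lemma singleton_incr_ending_at: "[k] \<in> incr_ending_at xs k"
  unfolding incr_ending_at_def by (auto intro!: exI[of _ "[]"])

lemma lis_at_witness:
  obtains I where "I \<in> incr_ending_at xs k" "length I = lis_at xs k"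
proof -
  have "lis_at xs k \<in> length ` incr_ending_at xs k"
    unfolding lis_at_def using singleton_incr_ending_at[of k xs]
    by (intro Max_in finite_lengths_incr_ending_at) blast+
  then show ?thesis using that by auto
qed

lemma lis_at_pos: "1 \<le> lis_at xs k"
  unfolding lis_at_def
  using Max_ge[OF finite_lengths_incr_ending_at imageI[OF singleton_incr_ending_at]] by simp

lemma lis_at_less:
  assumes "j < k" "xs ! j < xs ! k"
  shows "lis_at xs j < lis_at xs k"
proof -
  obtain I where I: "I \<in> incr_ending_at xs j" "length I = lis_at xs j"
    by (rule lis_at_witness)
  moreover have "\<forall>i\<in>set I. i < k \<and> xs ! i < xs ! k"
    using incr_ending_atD[OF I(1)] assms by fastforce
  ultimately have "I @ [k] \<in> incr_ending_at xs k"
    by (auto simp: incr_ending_at_def sorted_wrt_append)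
  then have "length (I @ [k]) \<le> lis_at xs k"
    unfolding lis_at_def by (intro Max_ge finite_lengths_incr_ending_at imageI)
  then show ?thesis using I by simp
qed

text \<open>Each level set of lis_at carries decreasing values, so a sequence without increasing
  subsequences of length d is a union of d - 1 decreasing ones.\<close>

lemma lis_at_eq_imp_decreasing:
  assumes "distinct xs" "j < k" "k < length xs" "lis_at xs j = lis_at xs k"
  shows "xs ! k < xs ! j"
  using lis_at_less[OF assms(2), of xs] assms nth_eq_iff_index_eq[OF assms(1)]
  by (metis less_irrefl linorder_neqE order.strict_trans)

lemma lis_at_less_if_incr_free:
  assumes "\<not> has_incr_subseq d xs" "k < length xs"
  shows "lis_at xs k < d"
proof (rule ccontr)
  assume "\<not> lis_at xs k < d"
  obtain I where I: "I \<in> incr_ending_at xs k" "length I = lis_at xs k"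
    by (rule lis_at_witness)
  then have "sorted_wrt (<) I" "sorted_wrt (<) (map ((!) xs) I)"
    by (auto simp: incr_ending_at_def)
  moreover have "\<forall>i\<in>set I. i < length xs"
    using incr_ending_atD(1)[OF I(1)] assms(2) by fastforce
  ultimately have "has_incr_subseq d xs"
    unfolding has_incr_subseq_def using \<open>\<not> lis_at xs k < d\<close> I(2)
    by (intro exI[of _ "take d I"]) (auto simp: take_map[symmetric] dest: in_set_takeD)
  then show False using assms(1) by simp
qed

lemma map_nth_level_set:
  fixes zs :: "'a::linorder list"
  assumes "distinct zs" and C: "\<And>k. k < length zs \<Longrightarrow> C (zs ! k) = L k"
    and decr: "\<And>j k. j < k \<Longrightarrow> k < length zs \<Longrightarrow> L j = L k \<Longrightarrow> zs ! k < zs ! j"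
  shows "map ((!) zs) (sorted_list_of_set {k. k < length zs \<and> L k = c})
       = rev (sorted_list_of_set {v \<in> set zs. C v = c})"
proof -
  let ?K = "{k. k < length zs \<and> L k = c}"
  let ?vs = "rev (map ((!) zs) (sorted_list_of_set ?K))"
  have "sorted_wrt (\<lambda>j k. zs ! k < zs ! j) (sorted_list_of_set ?K)"
    by (rule sorted_wrt_mono_rel[OF _ strict_sorted_list_of_set]) (auto intro: decr)
  then have "sorted_wrt (<) ?vs"
    by (simp add: sorted_wrt_rev sorted_wrt_map)
  moreover have "set ?vs = {v \<in> set zs. C v = c}"
    using C by (auto simp: in_set_conv_nth)
  ultimately have "sorted_list_of_set {v \<in> set zs. C v = c} = ?vs"
    by (metis sorted_list_of_set.idem_if_sorted_distinct strict_sorted_iff)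
  then show ?thesis by simp
qed

lemma decreasing_colour_classes_eq:
  fixes xs ys :: "'a::linorder list"
  assumes "distinct xs" "distinct ys" "length xs = length ys" "set xs = set ys"
    and "\<And>k. k < length xs \<Longrightarrow> C (xs ! k) = L k" "\<And>k. k < length ys \<Longrightarrow> C (ys ! k) = L k"
    and "\<And>j k. j < k \<Longrightarrow> k < length xs \<Longrightarrow> L j = L k \<Longrightarrow> xs ! k < xs ! j"
    and "\<And>j k. j < k \<Longrightarrow> k < length ys \<Longrightarrow> L j = L k \<Longrightarrow> ys ! k < ys ! j"
  shows "xs = ys"
proof (rule nth_equalityI)
  fix k assume k: "k < length xs"
  let ?ks = "sorted_list_of_set {j. j < length xs \<and> L j = L k}"
  have "map ((!) xs) ?ks = map ((!) ys) ?ks"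
    using map_nth_level_set[of xs C L "L k"] map_nth_level_set[of ys C L "L k"] assms by simp
  moreover have "k \<in> set ?ks" using k by simp
  ultimately show "xs ! k = ys ! k" by simp
qed (rule assms(3))

definition value_lis :: "'a::linorder list \<Rightarrow> 'a \<Rightarrow> nat" where
  "value_lis xs v = lis_at xs (the_inv_into {..<length xs} ((!) xs) v)"

lemma value_lis_nth: "distinct xs \<Longrightarrow> k < length xs \<Longrightarrow> value_lis xs (xs ! k) = lis_at xs k"
  by (simp add: value_lis_def the_inv_into_f_f inj_on_nth)

lemma value_lis_in_image: "distinct xs \<Longrightarrow> v \<in> set xs \<Longrightarrow> value_lis xs v \<in> lis_at xs ` {..<length xs}"
  by (auto simp: in_set_conv_nth value_lis_nth)

lemma eq_if_lis_colourings_eq: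
  fixes xs ys :: "'a::linorder list"
  assumes "distinct xs" "distinct ys" "length xs = length ys" "set xs = set ys"
    and pos: "\<And>k. k < length xs \<Longrightarrow> lis_at xs k = lis_at ys k"
    and val: "\<And>v. v \<in> set xs \<Longrightarrow> value_lis xs v = value_lis ys v"
  shows "xs = ys"
proof (rule decreasing_colour_classes_eq[where C = "value_lis xs" and L = "lis_at xs"])
  show "value_lis xs (ys ! k) = lis_at xs k" if "k < length ys" for k
    using that assms(2-4) val[of "ys ! k"] pos[of k] value_lis_nth[of ys k] by simp
  show "ys ! k < ys ! j" if "j < k" "k < length ys" "lis_at xs j = lis_at xs k" for j k
    using that assms(3) pos[of j] pos[of k] lis_at_eq_imp_decreasing[OF assms(2) that(1,2)] by simp
  show "value_lis xs (xs ! k) = lis_at xs k" if "k < length xs" for k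
    using value_lis_nth[OF assms(1) that] .
  show "xs ! k < xs ! j" if "j < k" "k < length xs" "lis_at xs j = lis_at xs k" for j k
    using lis_at_eq_imp_decreasing[OF assms(1) that] .
qed (use assms in simp_all)

lemma card_incr_free_permutations:
  fixes A :: "'a::linorder set"
  assumes "finite A"
  shows "card {xs \<in> permutations_of_set A. \<not> has_incr_subseq d xs} \<le> (d - 1) ^ (2 * card A)"
proof -
  let ?n = "card A" and ?S = "{xs \<in> permutations_of_set A. \<not> has_incr_subseq d xs}"
    and ?C = "({..<card A} \<rightarrow>\<^sub>E {1..d - 1}) \<times> (A \<rightarrow>\<^sub>E {1..d - 1})"
  define code where "code xs = (restrict (lis_at xs) {..<?n}, restrict (value_lis xs) A)" for xs
  have perm: "length xs = ?n" "distinct xs" "set xs = A" if "xs \<in> ?S" for xs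
    using that length_finite_permutations_of_set by (auto simp: permutations_of_set_def)
  have "inj_on code ?S"
  proof (rule inj_onI)
    fix xs ys assume xs: "xs \<in> ?S" and ys: "ys \<in> ?S" and "code xs = code ys"
    then have pos: "restrict (lis_at xs) {..<?n} = restrict (lis_at ys) {..<?n}"
      and val: "restrict (value_lis xs) A = restrict (value_lis ys) A"
      by (simp_all add: code_def)
    show "xs = ys"
    proof (rule eq_if_lis_colourings_eq)
      show "lis_at xs k = lis_at ys k" if "k < length xs" for k
        using fun_cong[OF pos, of k] that perm[OF xs] by simp
      show "value_lis xs v = value_lis ys v" if "v \<in> set xs" for v
        using fun_cong[OF val, of v] that perm[OF xs] by simp
    qed (use perm[OF xs] perm[OF ys] in simp_all)
  qed
  moreover have "code ` ?S \<subseteq> ?C"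
  proof -
    have col: "lis_at xs k \<in> {1..d - 1}" if "xs \<in> ?S" "k < ?n" for xs k
      using that lis_at_pos[of xs k] lis_at_less_if_incr_free[of d xs k] perm[OF that(1)] by auto
    have "code xs \<in> ?C" if "xs \<in> ?S" for xs
      using col[OF that] value_lis_in_image[of xs] perm[OF that]
      by (fastforce simp: code_def restrict_PiE_iff)
    then show ?thesis by blast
  qed
  ultimately have "card ?S \<le> card ?C"
    using assms by (intro card_inj_on_le finite_cartesian_product finite_PiE) auto
  also have "\<dots> = (d - 1) ^ (2 * ?n)"
    using assms by (simp add: card_cartesian_product card_PiE flip: power_add mult_2)
  finally show ?thesis .
qed

fun svar_kind :: "svar \<Rightarrow> bool \<times> bool" where
  "svar_kind (Y i j) = (True, i)"
| "svar_kind (Z i j) = (False, i)"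

lemma svar_eqI: "svar_kind x = svar_kind y \<Longrightarrow> vidx x = vidx y \<Longrightarrow> x = y"
  by (cases x; cases y) auto

lemma multilinear_words_vidx_permutation:
  assumes "u \<in> multilinear_words n"
  shows "map vidx u \<in> permutations_of_set {1..n}"
proof -
  have "card (set (map vidx u)) = length (map vidx u)"
    using assms by (simp add: multilinear_words_def)
  then have "distinct (map vidx u)" by (rule card_distinct)
  then show ?thesis
    using assms by (simp add: multilinear_words_def permutations_of_set_def)
qed

lemma card_incr_free_multilinear_words:
  "card {u \<in> multilinear_words n. \<not> has_incr_subseq d (map vidx u)} \<le> (4 * (d - 1) ^ 2) ^ n"
proof -
  let ?G = "{u \<in> multilinear_words n. \<not> has_incr_subseq d (map vidx u)}"
  let ?Perms = "{xs \<in> permutations_of_set {1..n}. \<not> has_incr_subseq d xs}"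
    and ?Kinds = "{ks. set ks \<subseteq> (UNIV :: (bool \<times> bool) set) \<and> length ks = n}"
  have "inj_on (\<lambda>u. (map vidx u, map svar_kind u)) ?G"
  proof (rule inj_onI)
    fix u v assume "(map vidx u, map svar_kind u) = (map vidx v, map svar_kind v)"
    then have "map vidx u = map vidx v" "map svar_kind u = map svar_kind v" by simp_all
    then show "u = v"
      by (intro nth_equalityI svar_eqI) (auto dest: map_eq_imp_length_eq simp: list_eq_iff_nth_eq)
  qed
  moreover have "(\<lambda>u. (map vidx u, map svar_kind u)) ` ?G \<subseteq> ?Perms \<times> ?Kinds"
    using multilinear_words_vidx_permutation by (auto simp: multilinear_words_def)
  moreover have "finite (?Perms \<times> ?Kinds)"
    by (intro finite_cartesian_product finite_lists_length_eq finite_subset[OF _ finite_permutations_of_set])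
       auto
  ultimately have "card ?G \<le> card (?Perms \<times> ?Kinds)"
    by (rule card_inj_on_le)
  also have "\<dots> \<le> (d - 1) ^ (2 * n) * 4 ^ n"
    using card_incr_free_permutations[of "{1..n}" d]
    by (simp add: card_cartesian_product card_lists_length_eq card_UNIV_bool UNIV_Times_UNIV[symmetric]
        card_cartesian_product del: UNIV_Times_UNIV)
  also have "\<dots> = (4 * (d - 1) ^ 2) ^ n"
    unfolding power_mult power_mult_distrib by (rule mult.commute)
  finally show ?thesis .
qed

theorem corollary2p3:
  fixes sc :: "'f::field_char_0 \<Rightarrow> 'a::ring \<Rightarrow> 'a"
    and Ag :: "bool \<Rightarrow> 'a set"
    and star :: "'a \<Rightarrow> 'a"
  assumes "sharp_superalgebra sc Ag star"
    and "PI_algebra sc"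
  shows "\<exists>d::real. \<forall>n\<ge>1. real (c_grs sc Ag star n) \<le> d ^ n"
proof -
  interpret nonunital_algebra sc
    using assms(1) by (intro assoc_algebra_imp_nonunital_algebra)
      (simp add: sharp_superalgebra_def superalgebra_def)
  obtain p :: "nat list \<Rightarrow> 'f" where "free_poly p" "p \<noteq> (\<lambda>_. 0)" "\<forall>s. eval_poly sc s p = 0"
    using assms(2) by (auto simp: PI_algebra_def)
  then obtain d \<beta> where ml: "multilinear_identity sc d \<beta>"
    using multilinear_identity_exists by blast
  have "c_grs sc Ag star n \<le> (4 * (d - 1) ^ 2) ^ n" for n
    using c_grs_le_card_incr_free[OF ml] card_incr_free_multilinear_words le_trans by blast
  then have "real (c_grs sc Ag star n) \<le> real (4 * (d - 1) ^ 2) ^ n" for n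
    by (metis of_nat_le_iff of_nat_power)
  then show ?thesis by blast
qed

end
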